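(* Let $U,V\in\mathbb{R}_{\max}^{m\times n}$, $b,d\in\mathbb{R}_{\max}^m$, $p\in\mathbb{R}_{\max}^n$, $q\in(\mathbb{R}\cup\{+\infty\})^n$, and suppose all finite entries of $p,q,U,b,V,d$ are integers. Consider the problem of minimizing $x^-\otimes p\oplus q^-\otimes x$ over $x\in\mathbb{R}^n$ subject to $U\otimes x\oplus b\leq V\otimes x\oplus d$. If the optimal value of this problem is finite, then it is an integer multiple of $1/2$.
   Context: $\mathbb{R}_{\max}=\mathbb{R}\cup\{-\infty\}$ with $a\oplus b=\max(a,b)$ and $a\otimes b=a+b$, extended to matrices and vectors in the usual way ($(A\otimes x)_i=\max_j(a_{ij}+x_j)$, componentwise max for $\oplus$). The conjugate of $a\in\mathbb{R}\cup\{\pm\infty\}$ is $a^-=-a$ if $a\in\mathbb{R}$, $+\infty$ if $a=-\infty$, $-\infty$ if $a=+\infty$; for a column vector $x$, $x^-$ is the row vector $(x_i^-)$. Thus $x^-\otimes p=\max_i(p_i-x_i)$ and $q^-\otimes x=\max_i(x_i-q_i)$ (terms with $p_i=-\infty$ or $q_i=+\infty$ being $-\infty$). *)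

theory Defs
  imports "HOL-Analysis.Analysis"
begin

text \<open>Max-plus semiring R_max = R \<union> {-\<infinity>} embedded in ereal.
  Matrices/vectors are nat-indexed with explicit bounds m, n.\<close>

definition is_int_ereal :: "ereal \<Rightarrow> bool" where
  "is_int_ereal a \<longleftrightarrow> (\<exists>k::int. a = ereal (of_int k))"

definition mp_affine :: "nat \<Rightarrow> (nat \<Rightarrow> nat \<Rightarrow> ereal) \<Rightarrow> (nat \<Rightarrow> ereal) \<Rightarrow> (nat \<Rightarrow> real) \<Rightarrow> nat \<Rightarrow> ereal" where
  "mp_affine n A c x i = max (SUP j\<in>{..<n}. A i j + ereal (x j)) (c i)"

text \<open>x^- \<otimes> p \<oplus> q^- \<otimes> x = max (max_j (p_j - x_j)) (max_j (x_j - q_j))\<close>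
definition mp_objective :: "nat \<Rightarrow> (nat \<Rightarrow> ereal) \<Rightarrow> (nat \<Rightarrow> ereal) \<Rightarrow> (nat \<Rightarrow> real) \<Rightarrow> ereal" where
  "mp_objective n p q x = max (SUP j\<in>{..<n}. p j - ereal (x j)) (SUP j\<in>{..<n}. ereal (x j) - q j)"

definition mp_feasible :: "nat \<Rightarrow> nat \<Rightarrow> (nat \<Rightarrow> nat \<Rightarrow> ereal) \<Rightarrow> (nat \<Rightarrow> ereal) \<Rightarrow> (nat \<Rightarrow> nat \<Rightarrow> ereal) \<Rightarrow> (nat \<Rightarrow> ereal) \<Rightarrow> (nat \<Rightarrow> real) \<Rightarrow> bool" where
  "mp_feasible m n U b V d x \<longleftrightarrow> (\<forall>i<m. mp_affine n U b x i \<le> mp_affine n V d x i)"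

text \<open>Optimal value = infimum of objective over feasible x \<in> R^n (x_j, j<n; other coordinates irrelevant).\<close>
definition mp_optval :: "nat \<Rightarrow> nat \<Rightarrow> (nat \<Rightarrow> nat \<Rightarrow> ereal) \<Rightarrow> (nat \<Rightarrow> ereal) \<Rightarrow> (nat \<Rightarrow> nat \<Rightarrow> ereal) \<Rightarrow> (nat \<Rightarrow> ereal) \<Rightarrow> (nat \<Rightarrow> ereal) \<Rightarrow> (nat \<Rightarrow> ereal) \<Rightarrow> ereal" where
  "mp_optval m n U b V d p q = (INF x\<in>{x. mp_feasible m n U b V d x}. mp_objective n p q x)"

end

theory Submission
  imports Defs
begin

text \<open>A monotone map \<open>g : \<real> \<rightarrow> \<real>\<close> that fixes 0 and commutes with integer translations
  commutes with every max-plus affine form with integer entries, so applied coordinatewise it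
  preserves feasibility; against integer data it also cannot increase the objective by more than
  its rounding error. If the optimal value lay strictly between \<open>k/2\<close> and \<open>(k+1)/2\<close>, rounding a
  feasible point of value below \<open>(k+1)/2\<close> to the nearest integer (\<open>k\<close> even) or to the nearest
  point of \<open>\<int> + 1/2\<close> unless already integral (\<open>k\<close> odd) would yield a feasible point of
  value at most \<open>k/2\<close>.\<close>

definition int_rounding :: "(real \<Rightarrow> real) \<Rightarrow> bool" where
  "int_rounding g \<longleftrightarrow> mono g \<and> g 0 = 0 \<and> (\<forall>t (z::int). g (t + of_int z) = g t + of_int z)"

definition ereal_lift :: "(real \<Rightarrow> real) \<Rightarrow> ereal \<Rightarrow> ereal" where
  "ereal_lift g t = (case t of ereal r \<Rightarrow> ereal (g r) | PInfty \<Rightarrow> \<infinity> | MInfty \<Rightarrow> -\<infinity>)"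

lemma mono_ereal_lift:
  assumes "mono g"
  shows "mono (ereal_lift g)"
proof (rule monoI)
  fix a b :: ereal
  assume "a \<le> b"
  then show "ereal_lift g a \<le> ereal_lift g b"
    using assms by (cases a; cases b) (auto simp: ereal_lift_def mono_def)
qed

lemma ereal_lift_SUP:
  assumes "finite S" "mono g"
  shows "ereal_lift g (SUP j\<in>S. f j) = (SUP j\<in>S. ereal_lift g (f j))"
  using assms(1)
proof (induction S rule: finite_induct)
  case empty
  then show ?case by (simp add: ereal_lift_def bot_ereal_def)
next
  case (insert a S)
  then show ?case
    using max_of_mono[OF mono_ereal_lift[OF assms(2)], of "f a" "Sup (f ` S)"]
    by (simp add: sup_max)
qed

lemma ereal_lift_add_int:
  assumes "int_rounding g" "a \<noteq> \<infinity>" "a \<noteq> -\<infinity> \<longrightarrow> is_int_ereal a"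
  shows "ereal_lift g (a + ereal t) = a + ereal (g t)"
proof (cases "a = -\<infinity>")
  case True
  then show ?thesis by (simp add: ereal_lift_def)
next
  case False
  then obtain z :: int where "a = ereal (of_int z)"
    using assms unfolding is_int_ereal_def by auto
  then show ?thesis
    using assms(1) by (simp add: ereal_lift_def int_rounding_def add.commute)
qed

lemma ereal_lift_mp_affine:
  assumes g: "int_rounding g"
    and A: "\<forall>j<n. A i j \<noteq> \<infinity> \<and> (A i j \<noteq> -\<infinity> \<longrightarrow> is_int_ereal (A i j))"
    and c: "c i \<noteq> \<infinity> \<and> (c i \<noteq> -\<infinity> \<longrightarrow> is_int_ereal (c i))"
  shows "ereal_lift g (mp_affine n A c x i) = mp_affine n A c (g \<circ> x) i"
proof -
  have mono_g: "mono g" using g by (simp add: int_rounding_def)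
  have "ereal_lift g (c i) = ereal_lift g (c i + ereal 0)" by simp
  also have "\<dots> = c i" using ereal_lift_add_int[OF g, of "c i" 0] c g by (simp add: int_rounding_def)
  finally have const: "ereal_lift g (c i) = c i" .
  have "ereal_lift g (mp_affine n A c x i)
      = max (SUP j\<in>{..<n}. ereal_lift g (A i j + ereal (x j))) (ereal_lift g (c i))"
    unfolding mp_affine_def max_of_mono[OF mono_ereal_lift[OF mono_g], symmetric]
    by (simp add: ereal_lift_SUP[OF _ mono_g])
  also have "\<dots> = mp_affine n A c (g \<circ> x) i"
    unfolding mp_affine_def const using ereal_lift_add_int[OF g] A
    by (intro arg_cong2[where f = max] SUP_cong) auto
  finally show ?thesis .
qed

definition round_nearest :: "real \<Rightarrow> real" where
  "round_nearest t = of_int \<lfloor>t + 1/2\<rfloor>"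

text \<open>Integers are fixed, every other real goes to the midpoint of its unit interval.\<close>
definition round_half :: "real \<Rightarrow> real" where
  "round_half t = (of_int \<lfloor>t\<rfloor> + of_int \<lceil>t\<rceil>) / 2"

lemma int_rounding_round_nearest: "int_rounding round_nearest"
proof -
  have "round_nearest (t + of_int z) = round_nearest t + of_int z" for t z
  proof -
    have "t + of_int z + 1/2 = (t + 1/2) + of_int z" by simp
    then show ?thesis unfolding round_nearest_def by (simp only: floor_add_int) simp
  qed
  then show ?thesis
    unfolding int_rounding_def by (auto intro: monoI simp: round_nearest_def floor_mono)
qed

lemma round_nearest_ge: "of_int c - 1/2 < t \<Longrightarrow> of_int c \<le> round_nearest t"
  unfolding round_nearest_def by (simp add: le_floor_iff)

lemma round_nearest_le: "t < of_int c + 1/2 \<Longrightarrow> round_nearest t \<le> of_int c"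
  unfolding round_nearest_def by (simp add: floor_le_iff)

lemma int_rounding_round_half: "int_rounding round_half"
  unfolding int_rounding_def round_half_def
  by (auto intro!: monoI divide_right_mono add_mono simp: floor_mono ceiling_mono field_simps)

lemma round_half_ge: "of_int c - 1 < t \<Longrightarrow> of_int c - 1/2 \<le> round_half t"
proof -
  assume "of_int c - 1 < t"
  then have "c - 1 \<le> \<lfloor>t\<rfloor>" and "c \<le> \<lceil>t\<rceil>" by (simp_all add: le_floor_iff le_ceiling_iff)
  then have "real_of_int (c - 1) \<le> of_int \<lfloor>t\<rfloor>" and "real_of_int c \<le> of_int \<lceil>t\<rceil>"
    by (simp_all only: of_int_le_iff)
  then show ?thesis unfolding round_half_def by simp
qed

lemma round_half_le: "t < of_int c + 1 \<Longrightarrow> round_half t \<le> of_int c + 1/2"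
proof -
  assume "t < of_int c + 1"
  then have "\<lfloor>t\<rfloor> \<le> c" and "\<lceil>t\<rceil> \<le> c + 1" by (simp_all add: floor_le_iff ceiling_le_iff)
  then have "real_of_int \<lfloor>t\<rfloor> \<le> of_int c" and "real_of_int \<lceil>t\<rceil> \<le> of_int (c + 1)"
    by (simp_all only: of_int_le_iff)
  then show ?thesis unfolding round_half_def by simp
qed

locale integral_mp_problem =
  fixes m n :: nat
    and U V :: "nat \<Rightarrow> nat \<Rightarrow> ereal" and b d p q :: "nat \<Rightarrow> ereal"
  assumes U: "\<forall>i<m. \<forall>j<n. U i j \<noteq> \<infinity> \<and> (U i j \<noteq> -\<infinity> \<longrightarrow> is_int_ereal (U i j))"
    and V: "\<forall>i<m. \<forall>j<n. V i j \<noteq> \<infinity> \<and> (V i j \<noteq> -\<infinity> \<longrightarrow> is_int_ereal (V i j))"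
    and b: "\<forall>i<m. b i \<noteq> \<infinity> \<and> (b i \<noteq> -\<infinity> \<longrightarrow> is_int_ereal (b i))"
    and d: "\<forall>i<m. d i \<noteq> \<infinity> \<and> (d i \<noteq> -\<infinity> \<longrightarrow> is_int_ereal (d i))"
    and p: "\<forall>j<n. p j \<noteq> \<infinity> \<and> (p j \<noteq> -\<infinity> \<longrightarrow> is_int_ereal (p j))"
    and q: "\<forall>j<n. q j \<noteq> -\<infinity> \<and> (q j \<noteq> \<infinity> \<longrightarrow> is_int_ereal (q j))"
begin

lemma mp_feasible_comp_rounding:
  assumes g: "int_rounding g" and x: "mp_feasible m n U b V d x"
  shows "mp_feasible m n U b V d (g \<circ> x)"
  unfolding mp_feasible_def
proof (intro allI impI)
  fix i assume i: "i < m"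
  have "mono (ereal_lift g)" using g by (simp add: int_rounding_def mono_ereal_lift)
  then have "ereal_lift g (mp_affine n U b x i) \<le> ereal_lift g (mp_affine n V d x i)"
    using x i unfolding mp_feasible_def mono_def by blast
  then show "mp_affine n U b (g \<circ> x) i \<le> mp_affine n V d (g \<circ> x) i"
    using ereal_lift_mp_affine[OF g, of n U i b x] ereal_lift_mp_affine[OF g, of n V i d x] U V b d i
    by auto
qed

lemma mp_objective_comp_le:
  assumes lower: "\<And>(c::int) t. of_int c - s < t \<Longrightarrow> of_int c - s' \<le> g t"
    and upper: "\<And>(c::int) t. t < of_int c + s \<Longrightarrow> g t \<le> of_int c + s'"
    and x: "mp_objective n p q x < ereal s"
  shows "mp_objective n p q (g \<circ> x) \<le> ereal s'"
  unfolding mp_objective_def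
proof (intro max.boundedI SUP_least)
  fix j assume j: "j \<in> {..<n}"
  have "p j - ereal (x j) \<le> mp_objective n p q x"
    unfolding mp_objective_def using j by (intro max.coboundedI1 SUP_upper) auto
  then have lt: "p j - ereal (x j) < ereal s" using x by simp
  show "p j - ereal ((g \<circ> x) j) \<le> ereal s'"
  proof (cases "p j = -\<infinity>")
    case False
    then obtain c :: int where "p j = ereal (of_int c)" using p j unfolding is_int_ereal_def by auto
    then show ?thesis using lt lower[of c "x j"] by simp
  qed simp
next
  fix j assume j: "j \<in> {..<n}"
  have "ereal (x j) - q j \<le> mp_objective n p q x"
    unfolding mp_objective_def using j by (intro max.coboundedI2 SUP_upper) auto
  then have lt: "ereal (x j) - q j < ereal s" using x by simp
  show "ereal ((g \<circ> x) j) - q j \<le> ereal s'"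
  proof (cases "q j = \<infinity>")
    case False
    then obtain c :: int where "q j = ereal (of_int c)" using q j unfolding is_int_ereal_def by auto
    then show ?thesis using lt upper[of "x j" c] by (simp add: add.commute)
  qed simp
qed

lemma mp_optval_le_by_rounding:
  assumes g: "int_rounding g"
    and lower: "\<And>(c::int) t. of_int c - s < t \<Longrightarrow> of_int c - s' \<le> g t"
    and upper: "\<And>(c::int) t. t < of_int c + s \<Longrightarrow> g t \<le> of_int c + s'"
    and less: "mp_optval m n U b V d p q < ereal s"
  shows "mp_optval m n U b V d p q \<le> ereal s'"
proof -
  obtain x where x: "mp_feasible m n U b V d x" and obj: "mp_objective n p q x < ereal s"
    using less unfolding mp_optval_def by (auto simp: INF_less_iff)
  have "mp_optval m n U b V d p q \<le> mp_objective n p q (g \<circ> x)"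
    unfolding mp_optval_def using mp_feasible_comp_rounding[OF g x] by (intro INF_lower) simp
  also have "\<dots> \<le> ereal s'"
    using mp_objective_comp_le[OF lower upper obj] .
  finally show ?thesis .
qed

lemma mp_optval_le_half_floor:
  assumes less: "mp_optval m n U b V d p q < ereal ((of_int k + 1) / 2)"
  shows "mp_optval m n U b V d p q \<le> ereal (of_int k / 2)"
proof (cases "even k")
  case True
  then obtain w where "k = 2 * w" by auto
  then have half: "(real_of_int k + 1) / 2 = of_int w + 1/2" "real_of_int k / 2 = of_int w" by simp_all
  show ?thesis
  proof (rule mp_optval_le_by_rounding[OF int_rounding_round_nearest])
    show "of_int c - of_int k / 2 \<le> round_nearest t"
      if "of_int c - (of_int k + 1) / 2 < t" for c :: int and t
      using round_nearest_ge[of "c - w" t] that unfolding half of_int_diff of_int_add by linarith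
    show "round_nearest t \<le> of_int c + of_int k / 2"
      if "t < of_int c + (of_int k + 1) / 2" for c :: int and t
      using round_nearest_le[of t "c + w"] that unfolding half of_int_diff of_int_add by linarith
  qed (rule less)
next
  case False
  then obtain w where "k = 2 * w + 1" by (metis oddE)
  then have half: "(real_of_int k + 1) / 2 = of_int w + 1" "real_of_int k / 2 = of_int w + 1/2" by simp_all
  show ?thesis
  proof (rule mp_optval_le_by_rounding[OF int_rounding_round_half])
    show "of_int c - of_int k / 2 \<le> round_half t"
      if "of_int c - (of_int k + 1) / 2 < t" for c :: int and t
      using round_half_ge[of "c - w" t] that unfolding half of_int_diff of_int_add by linarith
    show "round_half t \<le> of_int c + of_int k / 2"
      if "t < of_int c + (of_int k + 1) / 2" for c :: int and t
      using round_half_le[of t "c + w"] that unfolding half of_int_diff of_int_add by linarith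
  qed (rule less)
qed

lemma mp_optval_half_integer:
  assumes "\<bar>mp_optval m n U b V d p q\<bar> \<noteq> \<infinity>"
  shows "\<exists>k::int. mp_optval m n U b V d p q = ereal (of_int k / 2)"
proof -
  obtain r where r: "mp_optval m n U b V d p q = ereal r"
    using assms by (cases "mp_optval m n U b V d p q") auto
  define k where "k = \<lfloor>2 * r\<rfloor>"
  have "r < (of_int k + 1) / 2"
    using real_of_int_floor_add_one_gt[of "2 * r"] unfolding k_def by (simp add: field_simps)
  then have "r \<le> of_int k / 2" using mp_optval_le_half_floor[of k] r by simp
  moreover have "of_int k / 2 \<le> r"
    using of_int_floor_le[of "2 * r"] unfolding k_def by (simp add: field_simps)
  ultimately show ?thesis using r by (intro exI[of _ k]) simp
qed

end

theorem proposition9: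
  fixes m n :: nat
    and U V :: "nat \<Rightarrow> nat \<Rightarrow> ereal" and b d p q :: "nat \<Rightarrow> ereal"
  assumes U: "\<forall>i<m. \<forall>j<n. U i j \<noteq> \<infinity> \<and> (U i j \<noteq> -\<infinity> \<longrightarrow> is_int_ereal (U i j))"
    and V: "\<forall>i<m. \<forall>j<n. V i j \<noteq> \<infinity> \<and> (V i j \<noteq> -\<infinity> \<longrightarrow> is_int_ereal (V i j))"
    and b: "\<forall>i<m. b i \<noteq> \<infinity> \<and> (b i \<noteq> -\<infinity> \<longrightarrow> is_int_ereal (b i))"
    and d: "\<forall>i<m. d i \<noteq> \<infinity> \<and> (d i \<noteq> -\<infinity> \<longrightarrow> is_int_ereal (d i))"
    and p: "\<forall>j<n. p j \<noteq> \<infinity> \<and> (p j \<noteq> -\<infinity> \<longrightarrow> is_int_ereal (p j))"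
    and q: "\<forall>j<n. q j \<noteq> -\<infinity> \<and> (q j \<noteq> \<infinity> \<longrightarrow> is_int_ereal (q j))"
    and fin: "\<bar>mp_optval m n U b V d p q\<bar> \<noteq> \<infinity>"
  shows "\<exists>k::int. mp_optval m n U b V d p q = ereal (real_of_int k / 2)"
proof -
  interpret integral_mp_problem m n U V b d p q
    using U V b d p q by unfold_locales
  show ?thesis using mp_optval_half_integer[OF fin] .
qed

end
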